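(* The graph $K_{10}-3K_2$ has a triangular embedding in an orientable surface, and the octahedral graph $O_{10}$ has orientable genus $\lceil (4\cdot 2)/3\rceil = 3$.
   Context: $K_{10}-3K_2$ is $K_{10}$ with the 3 edges of a matching removed. $O_{10}$ is $K_{10}$ with the edges of a perfect matching removed. An embedding is triangular if it is cellular and every face is bounded by a closed walk of length 3. *)

theory Defs
  imports Complex_Main
begin

text \<open>Orientable (cellular) embeddings are described combinatorially by
  rotation systems (Heffter--Edmonds--Ringel): for each vertex v a cyclic permutation
  of its neighbours. Faces are the orbits of the face-tracing permutation on darts
  (u,v) \<mapsto> (v, \<rho> v u); the genus of the embedding is obtained from Euler's formula
  V - E + F = 2 - 2g (graphs considered here are connected).\<close>

definition simple_graph :: "'a set \<Rightarrow> 'a set set \<Rightarrow> bool" where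
  "simple_graph V E \<longleftrightarrow> finite V \<and> (\<forall>e\<in>E. e \<subseteq> V \<and> card e = 2)"

definition nbrs :: "'a set set \<Rightarrow> 'a \<Rightarrow> 'a set" where
  "nbrs E v = {u. {u, v} \<in> E \<and> u \<noteq> v}"

definition darts :: "'a set set \<Rightarrow> ('a \<times> 'a) set" where
  "darts E = {(u, v). {u, v} \<in> E \<and> u \<noteq> v}"

definition rotation_system :: "'a set \<Rightarrow> 'a set set \<Rightarrow> ('a \<Rightarrow> 'a \<Rightarrow> 'a) \<Rightarrow> bool" where
  "rotation_system V E \<rho> \<longleftrightarrow>
     (\<forall>v\<in>V. bij_betw (\<rho> v) (nbrs E v) (nbrs E v) \<and>
       (\<forall>u\<in>nbrs E v. \<forall>w\<in>nbrs E v. \<exists>k. (\<rho> v ^^ k) u = w))"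

definition face_step :: "('a \<Rightarrow> 'a \<Rightarrow> 'a) \<Rightarrow> 'a \<times> 'a \<Rightarrow> 'a \<times> 'a" where
  "face_step \<rho> d = (snd d, \<rho> (snd d) (fst d))"

definition face_orbit :: "('a \<Rightarrow> 'a \<Rightarrow> 'a) \<Rightarrow> 'a \<times> 'a \<Rightarrow> ('a \<times> 'a) set" where
  "face_orbit \<rho> d = {(face_step \<rho> ^^ k) d | k. True}"

definition faces :: "'a set set \<Rightarrow> ('a \<Rightarrow> 'a \<Rightarrow> 'a) \<Rightarrow> ('a \<times> 'a) set set" where
  "faces E \<rho> = face_orbit \<rho> ` darts E"

definition emb_genus :: "'a set \<Rightarrow> 'a set set \<Rightarrow> ('a \<Rightarrow> 'a \<Rightarrow> 'a) \<Rightarrow> nat" where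
  "emb_genus V E \<rho> =
     nat ((2 - int (card V) + int (card E) - int (card (faces E \<rho>))) div 2)"

definition has_triangular_orientable_embedding :: "'a set \<Rightarrow> 'a set set \<Rightarrow> bool" where
  "has_triangular_orientable_embedding V E \<longleftrightarrow>
     (\<exists>\<rho>. rotation_system V E \<rho> \<and> (\<forall>f\<in>faces E \<rho>. card f = 3))"

definition orientable_genus :: "'a set \<Rightarrow> 'a set set \<Rightarrow> nat" where
  "orientable_genus V E = (LEAST g. \<exists>\<rho>. rotation_system V E \<rho> \<and> emb_genus V E \<rho> = g)"

definition K_edges :: "nat \<Rightarrow> nat set set" where
  "K_edges n = {{u, v} | u v. u < n \<and> v < n \<and> u \<noteq> v}"

definition K10_minus_3K2_edges :: "nat set set" where
  "K10_minus_3K2_edges = K_edges 10 - {{0,1},{2,3},{4,5}}"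

definition O10_edges :: "nat set set" where
  "O10_edges = K_edges 10 - {{0,1},{2,3},{4,5},{6,7},{8,9}}"

end

theory Submission
  imports Defs "HOL-Combinatorics.Cycles" "HOL-Combinatorics.Orbits"
begin

(* Both embeddings are given by explicit rotation systems, with the rotation at a vertex
   encoded as the cyclic permutation of a list of its neighbours.  Face tracing shows that
   every face of the first one is a triangle; for the second one it exhibits 26 faces
   (24 triangles and 2 quadrilaterals), hence genus (2 - 10 + 40 - 26) / 2 = 3.
   Conversely, in a simple graph of minimum degree 2 every face has at least three darts,
   so any embedding of O_10 has 3 F <= 2 E = 80, i.e. F <= 26, and Euler's formula gives
   genus at least 3. *)

lemma map_funpow_eq_rotate:
  assumes "map f xs = rotate1 xs"
  shows "map (f ^^ n) xs = rotate n xs"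
proof (induction n)
  case (Suc n)
  have "map (f ^^ Suc n) xs = map f (rotate n xs)"
    by (simp flip: Suc)
  also have "\<dots> = rotate (Suc n) xs"
    by (simp add: assms rotate1_rotate_swap flip: rotate_map)
  finally show ?case .
qed simp

lemma iterates_eq_set_if_map_eq_rotate1:
  assumes "map f xs = rotate1 xs" and "x \<in> set xs"
  shows "{(f ^^ n) x | n. True} = set xs"
proof -
  obtain i where i: "i < length xs" "x = xs ! i" using assms(2) by (metis in_set_conv_nth)
  have iter: "(f ^^ n) x = xs ! ((n + i) mod length xs)" for n
    using map_funpow_eq_rotate[OF assms(1), of n] i by (metis length_map nth_map nth_rotate)
  show ?thesis
  proof (intro set_eqI iffI)
    fix y assume "y \<in> {(f ^^ n) x | n. True}"
    then obtain n where "y = (f ^^ n) x" by blast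
    moreover have "(n + i) mod length xs < length xs" using i(1) by (auto intro: mod_less_divisor)
    ultimately show "y \<in> set xs" using iter by simp
  next
    fix y assume "y \<in> set xs"
    then obtain j where j: "j < length xs" "y = xs ! j" by (metis in_set_conv_nth)
    have "(j + length xs - i + i) mod length xs = j" using i j by simp
    then have "(f ^^ (j + length xs - i)) x = y" using iter j by simp
    then show "y \<in> {(f ^^ n) x | n. True}" by blast
  qed
qed

lemma rotation_system_cycle_of_list:
  assumes "\<And>v. v \<in> V \<Longrightarrow> distinct (R v) \<and> set (R v) = nbrs E v"
  shows "rotation_system V E (\<lambda>v. cycle_of_list (R v))"
  unfolding rotation_system_def
proof (intro ballI conjI)
  fix v assume "v \<in> V"
  then show "bij_betw (cycle_of_list (R v)) (nbrs E v) (nbrs E v)"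
    using permutes_imp_bij[OF cycle_permutes, of "R v"] assms by simp
next
  fix v u w assume v: "v \<in> V" and "u \<in> nbrs E v" "w \<in> nbrs E v"
  then have u: "u \<in> set (R v)" and w: "w \<in> set (R v)" using assms by auto
  have "map (cycle_of_list (R v)) (R v) = rotate1 (R v)"
    using cyclic_rotation[of "R v" 1] assms[OF v] by simp
  then have "w \<in> {(cycle_of_list (R v) ^^ k) u | k. True}"
    using iterates_eq_set_if_map_eq_rotate1[OF _ u] w by blast
  then show "\<exists>k. (cycle_of_list (R v) ^^ k) u = w" by blast
qed

section \<open>Face tracing\<close>

lemma darts_iff_nbrs: "(u, v) \<in> darts E \<longleftrightarrow> u \<in> nbrs E v"
  unfolding darts_def nbrs_def by auto

lemma nbrs_sym: "u \<in> nbrs E v \<longleftrightarrow> v \<in> nbrs E u"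
  unfolding nbrs_def by (auto simp: insert_commute)

lemma darts_subset:
  assumes "simple_graph V E"
  shows "darts E \<subseteq> V \<times> V"
  using assms unfolding simple_graph_def darts_def by auto

lemma finite_darts:
  assumes "simple_graph V E"
  shows "finite (darts E)"
  by (rule finite_subset[OF darts_subset[OF assms]]) (use assms in \<open>simp add: simple_graph_def\<close>)

lemma card_darts:
  assumes "simple_graph V E"
  shows "card (darts E) = 2 * card E"
proof -
  define D where "D e = {(u, v). e = {u, v} \<and> u \<noteq> v}" for e :: "'a set"
  from assms have finV: "finite V" and edges: "\<And>e. e \<in> E \<Longrightarrow> e \<subseteq> V \<and> card e = 2"
    unfolding simple_graph_def by auto
  have "E \<subseteq> Pow V" using edges by auto
  then have fin: "finite E" using finV by (simp add: finite_subset)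
  have card_D: "card (D e) = 2" if e: "e \<in> E" for e
  proof -
    obtain a b where "e = {a, b}" "a \<noteq> b"
      using edges[OF e] by (meson card_2_iff)
    then have "D e = {(a, b), (b, a)}" unfolding D_def by (auto simp: doubleton_eq_iff)
    then show ?thesis using \<open>a \<noteq> b\<close> by simp
  qed
  have "darts E = (\<Union>e\<in>E. D e)" unfolding darts_def D_def by auto
  also have "card \<dots> = (\<Sum>e\<in>E. card (D e))"
    using fin card_D by (intro card_UN_disjoint) (auto simp: D_def card_ge_0_finite)
  also have "\<dots> = 2 * card E" using card_D by simp
  finally show ?thesis .
qed

lemma funpow_in_face_orbit: "(face_step \<rho> ^^ n) d \<in> face_orbit \<rho> d"
  unfolding face_orbit_def by blast

lemma self_in_face_orbit: "d \<in> face_orbit \<rho> d"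
  using funpow_in_face_orbit[of 0 \<rho> d] by simp

lemma face_orbit_closed_walk:
  assumes "map (face_step \<rho>) w = rotate1 w" and "d \<in> set w"
  shows "face_orbit \<rho> d = set w"
  unfolding face_orbit_def using iterates_eq_set_if_map_eq_rotate1[OF assms] .

context
  fixes V :: "'a set" and E :: "'a set set" and \<rho> :: "'a \<Rightarrow> 'a \<Rightarrow> 'a"
  assumes simple: "simple_graph V E" and rot: "rotation_system V E \<rho>"
begin

lemma face_step_in_darts:
  assumes "d \<in> darts E"
  shows "face_step \<rho> d \<in> darts E"
proof -
  obtain u v where d: "d = (u, v)" by fastforce
  have "v \<in> V" using assms d darts_subset[OF simple] by blast
  moreover have "u \<in> nbrs E v" using assms d by (simp add: darts_iff_nbrs)
  ultimately have "\<rho> v u \<in> nbrs E v"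
    using rot unfolding rotation_system_def bij_betw_def by blast
  then show ?thesis unfolding d face_step_def by (simp add: darts_iff_nbrs nbrs_sym)
qed

lemma inj_on_face_step: "inj_on (face_step \<rho>) (darts E)"
proof (rule inj_onI)
  fix d d' assume d: "d \<in> darts E" and d': "d' \<in> darts E"
    and eq: "face_step \<rho> d = face_step \<rho> d'"
  obtain u v u' v' where uv: "d = (u, v)" "d' = (u', v')" by fastforce
  have "v = v'" and "\<rho> v u = \<rho> v u'" using eq uv unfolding face_step_def by auto
  moreover have "v \<in> V" using d uv darts_subset[OF simple] by blast
  moreover have "u \<in> nbrs E v" "u' \<in> nbrs E v" using d d' uv \<open>v = v'\<close> by (auto simp: darts_iff_nbrs)
  ultimately show "d = d'"
    using rot uv unfolding rotation_system_def bij_betw_def inj_on_def by blast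
qed

(* face_step is arbitrary outside the darts; restricted to them it is a permutation,
   which gives access to the orbit theory of HOL-Combinatorics. *)
abbreviation face_perm :: "'a \<times> 'a \<Rightarrow> 'a \<times> 'a" where
  "face_perm \<equiv> perm_restrict (face_step \<rho>) (darts E)"

lemma face_perm_permutes: "face_perm permutes darts E"
proof (rule bij_imp_permutes)
  have "face_step \<rho> ` darts E = darts E"
    using finite_darts[OF simple] face_step_in_darts inj_on_face_step by (intro endo_inj_surj) auto
  then have "bij_betw (face_step \<rho>) (darts E) (darts E)"
    using inj_on_face_step unfolding bij_betw_def by blast
  moreover have "bij_betw face_perm (darts E) (darts E) \<longleftrightarrow> bij_betw (face_step \<rho>) (darts E) (darts E)"
    by (rule bij_betw_cong) (simp add: perm_restrict_simps)
  ultimately show "bij_betw face_perm (darts E) (darts E)" by (simp only:)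
next
  show "face_perm d = d" if "d \<notin> darts E" for d
    using that by (rule perm_restrict_simps(2))
qed

lemma face_orbit_eq_orbit:
  assumes "d \<in> darts E"
  shows "face_orbit \<rho> d = orbit face_perm d"
proof -
  have iter: "(face_perm ^^ n) d = (face_step \<rho> ^^ n) d" for n
  proof (induction n)
    case (Suc n)
    have "(face_step \<rho> ^^ n) d \<in> darts E"
      using assms face_step_in_darts by (induction n) auto
    then show ?case using Suc by (simp add: perm_restrict_simps)
  qed simp
  have "permutation face_perm"
    using face_perm_permutes finite_darts[OF simple] permutation_permutes by blast
  then show ?thesis by (simp only: face_orbit_def orbit_altdef_permutation iter)
qed

lemma face_orbit_subset_darts: "d \<in> darts E \<Longrightarrow> face_orbit \<rho> d \<subseteq> darts E"
  using face_orbit_eq_orbit permutes_orbit_subset[OF face_perm_permutes] by simp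

lemma face_orbit_eqI:
  assumes "d \<in> darts E" and "d' \<in> face_orbit \<rho> d"
  shows "face_orbit \<rho> d' = face_orbit \<rho> d"
proof -
  have "cyclic_on face_perm (orbit face_perm d)"
    using cyclic_on_orbit[OF face_perm_permutes finite_darts[OF simple]] .
  moreover have "d' \<in> darts E" using assms face_orbit_subset_darts by blast
  ultimately show ?thesis using assms face_orbit_eq_orbit by (simp add: orbit_cyclic_eq3)
qed

lemma card_darts_eq_sum_faces: "card (darts E) = (\<Sum>f\<in>faces E \<rho>. card f)"
proof -
  have "darts E = \<Union>(faces E \<rho>)"
  proof
    show "darts E \<subseteq> \<Union>(faces E \<rho>)"
      unfolding faces_def using self_in_face_orbit by fast
    show "\<Union>(faces E \<rho>) \<subseteq> darts E"
      unfolding faces_def using face_orbit_subset_darts by fast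
  qed
  moreover have "pairwise disjnt (faces E \<rho>)"
  proof (rule pairwiseI)
    fix f g assume "f \<in> faces E \<rho>" "g \<in> faces E \<rho>" "f \<noteq> g"
    then obtain a b where "a \<in> darts E" "b \<in> darts E" "f = face_orbit \<rho> a" "g = face_orbit \<rho> b"
      unfolding faces_def by blast
    then show "disjnt f g"
      using \<open>f \<noteq> g\<close> face_orbit_eqI unfolding disjnt_def by (metis disjoint_iff)
  qed
  moreover have "finite f" if "f \<in> faces E \<rho>" for f
    using that finite_darts[OF simple] face_orbit_subset_darts finite_subset
    unfolding faces_def by blast
  ultimately show ?thesis by (simp add: card_Union_disjoint)
qed

lemma finite_faces: "finite (faces E \<rho>)"
  unfolding faces_def using finite_darts[OF simple] by simp

lemma card_face_orbit_ge_3: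
  assumes deg: "\<And>v. v \<in> V \<Longrightarrow> 2 \<le> card (nbrs E v)" and d: "d \<in> darts E"
  shows "3 \<le> card (face_orbit \<rho> d)"
proof -
  let ?s = "face_step \<rho>"
  obtain u v where uv: "d = (u, v)" by fastforce
  have v: "v \<in> V" using d uv darts_subset[OF simple] by blast
  have u: "u \<in> nbrs E v" using d uv by (simp add: darts_iff_nbrs)
  then have "u \<noteq> v" by (simp add: nbrs_def)
  then have ne1: "d \<noteq> ?s d" using uv by (simp add: face_step_def)
  have ne2: "d \<noteq> ?s (?s d)"
  proof
    assume "d = ?s (?s d)"
    then have fixed: "\<rho> v u = u" using uv by (simp add: face_step_def)
    have "(\<rho> v ^^ k) u = u" for k by (induction k) (simp_all add: fixed)
    then have "w = u" if "w \<in> nbrs E v" for w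
      using rot v u that unfolding rotation_system_def by metis
    then have "nbrs E v = {u}" using u by blast
    then show False using deg[OF v] by simp
  qed
  have ne3: "?s d \<noteq> ?s (?s d)"
    using ne1 d face_step_in_darts inj_on_face_step unfolding inj_on_def by metis
  have "{d, ?s d, ?s (?s d)} \<subseteq> face_orbit \<rho> d"
    using self_in_face_orbit[of d \<rho>] funpow_in_face_orbit[of 1 \<rho> d] funpow_in_face_orbit[of 2 \<rho> d]
    by (simp add: numeral_2_eq_2)
  moreover have "finite (face_orbit \<rho> d)"
    using finite_darts[OF simple] face_orbit_subset_darts[OF d] by (rule finite_subset[rotated])
  ultimately have "card {d, ?s d, ?s (?s d)} \<le> card (face_orbit \<rho> d)" by (rule card_mono[rotated])
  then show ?thesis using ne1 ne2 ne3 by simp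
qed

lemma card_faces_le:
  assumes "\<And>v. v \<in> V \<Longrightarrow> 2 \<le> card (nbrs E v)"
  shows "3 * card (faces E \<rho>) \<le> 2 * card E"
proof -
  have "3 * card (faces E \<rho>) = (\<Sum>f\<in>faces E \<rho>. 3)" by simp
  also have "\<dots> \<le> (\<Sum>f\<in>faces E \<rho>. card f)"
    using card_face_orbit_ge_3[OF assms] by (intro sum_mono) (auto simp: faces_def)
  also have "\<dots> = card (darts E)" by (rule card_darts_eq_sum_faces[symmetric])
  also have "\<dots> = 2 * card E" by (rule card_darts[OF simple])
  finally show ?thesis .
qed

lemma length_le_card_faces:
  assumes walks: "\<And>w. w \<in> set W \<Longrightarrow> w \<noteq> [] \<and> set w \<subseteq> darts E \<and> map (face_step \<rho>) w = rotate1 w"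
    and disj: "distinct (concat W)"
  shows "length W \<le> card (faces E \<rho>)"
proof -
  have "set ` set W \<subseteq> faces E \<rho>"
  proof
    fix f assume "f \<in> set ` set W"
    then obtain w where w: "w \<in> set W" "f = set w" by blast
    then have "hd w \<in> darts E" and "face_orbit \<rho> (hd w) = f"
      using walks[OF w(1)] face_orbit_closed_walk[of \<rho> w "hd w"] by auto
    then show "f \<in> faces E \<rho>" unfolding faces_def by blast
  qed
  moreover have "distinct (map set W)"
  proof -
    have "removeAll [] W = W" by (rule removeAll_id) (use walks in blast)
    then have "distinct W" using disj by (simp add: distinct_concat_iff)
    moreover have "inj_on set (set W)"
    proof (rule inj_onI)
      fix w w' assume w: "w \<in> set W" and w': "w' \<in> set W" and eq: "set w = set w'"
      show "w = w'"
      proof (rule ccontr)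
        assume "w \<noteq> w'"
        then have "set w \<inter> set w' = {}" using disj w w' unfolding distinct_concat_iff by blast
        then show False using eq walks[OF w] by simp
      qed
    qed
    ultimately show ?thesis by (simp add: distinct_map)
  qed
  ultimately show ?thesis
    using finite_faces by (metis card_mono distinct_card length_map set_map)
qed

end

definition triangle_at :: "('a \<Rightarrow> 'a \<Rightarrow> 'a) \<Rightarrow> 'a \<times> 'a \<Rightarrow> bool" where
  "triangle_at \<rho> d \<longleftrightarrow> face_step \<rho> (face_step \<rho> (face_step \<rho> d)) = d
     \<and> distinct [d, face_step \<rho> d, face_step \<rho> (face_step \<rho> d)]"

lemma card_face_orbit_eq_3: "triangle_at \<rho> d \<Longrightarrow> card (face_orbit \<rho> d) = 3"
  using face_orbit_closed_walk[of \<rho> "[d, face_step \<rho> d, face_step \<rho> (face_step \<rho> d)]" d]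
  by (simp add: triangle_at_def card_insert_if)

lemma has_triangular_orientable_embeddingI:
  assumes "rotation_system V E \<rho>" and "\<forall>d\<in>darts E. triangle_at \<rho> d"
  shows "has_triangular_orientable_embedding V E"
  unfolding has_triangular_orientable_embedding_def
proof (intro exI conjI ballI)
  fix f assume "f \<in> faces E \<rho>"
  then obtain d where "d \<in> darts E" and "f = face_orbit \<rho> d" unfolding faces_def by blast
  then show "card f = 3" using assms(2) card_face_orbit_eq_3 by blast
qed (fact assms(1))

section \<open>Rotations of complete graphs with deleted edges\<close>

lemma K_edges_eq: "K_edges n = {e. e \<subseteq> {..<n} \<and> card e = 2}"
  unfolding K_edges_def card_2_iff by blast

lemma card_K_edges: "card (K_edges n) = n choose 2"
  using n_subsets[of "{..<n}" 2] by (simp add: K_edges_eq)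

lemma simple_graph_K_edges_minus: "simple_graph {0..<n} (K_edges n - M)"
  unfolding simple_graph_def K_edges_eq by auto

lemma nbrs_K_edges_minus:
  assumes "v < n"
  shows "nbrs (K_edges n - M) v = {u. u < n \<and> u \<noteq> v \<and> {u, v} \<notin> M}"
  using assms unfolding nbrs_def K_edges_eq by (auto simp: card_insert_if)

(* Phrased via sorting so that it can be checked by evaluation. *)
definition neighbour_lists :: "nat \<Rightarrow> nat set set \<Rightarrow> nat list list \<Rightarrow> bool" where
  "neighbour_lists n M R \<longleftrightarrow>
     list_all (\<lambda>v. sort (R ! v) = filter (\<lambda>u. u \<noteq> v \<and> {u, v} \<notin> M) [0..<n]) [0..<n]"

definition list_rotation :: "nat list list \<Rightarrow> nat \<Rightarrow> nat \<Rightarrow> nat" where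
  "list_rotation R v = cycle_of_list (R ! v)"

definition list_darts :: "nat \<Rightarrow> nat list list \<Rightarrow> (nat \<times> nat) list" where
  "list_darts n R = concat (map (\<lambda>v. map (\<lambda>u. (u, v)) (R ! v)) [0..<n])"

context
  fixes n :: nat and M :: "nat set set" and R :: "nat list list"
  assumes R: "neighbour_lists n M R"
begin

lemma neighbour_lists_nbrs:
  assumes "v < n"
  shows "distinct (R ! v) \<and> set (R ! v) = nbrs (K_edges n - M) v"
proof -
  have sorted: "sort (R ! v) = filter (\<lambda>u. u \<noteq> v \<and> {u, v} \<notin> M) [0..<n]"
    using R assms unfolding neighbour_lists_def by (simp add: list_all_iff)
  have "distinct (sort (R ! v))" unfolding sorted by simp
  moreover have "set (sort (R ! v)) = {u. u < n \<and> u \<noteq> v \<and> {u, v} \<notin> M}"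
    unfolding sorted by auto
  ultimately show ?thesis using nbrs_K_edges_minus[OF assms] by simp
qed

lemma rotation_system_list_rotation:
  "rotation_system {0..<n} (K_edges n - M) (list_rotation R)"
  unfolding list_rotation_def[abs_def]
  by (rule rotation_system_cycle_of_list) (use neighbour_lists_nbrs in auto)

lemma darts_K_edges_minus_eq: "darts (K_edges n - M) = set (list_darts n R)"
proof -
  have "v < n" if "(u, v) \<in> darts (K_edges n - M)" for u v
    using that unfolding darts_def K_edges_eq by auto
  then have "(u, v) \<in> darts (K_edges n - M) \<longleftrightarrow> v < n \<and> u \<in> set (R ! v)" for u v
    using neighbour_lists_nbrs by (auto simp: darts_iff_nbrs)
  moreover have "set (list_darts n R) = {(u, v). v < n \<and> u \<in> set (R ! v)}"
    unfolding list_darts_def by auto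
  ultimately show ?thesis by auto
qed

end

definition K10_minus_3K2_rotation :: "nat list list" where
  "K10_minus_3K2_rotation =
    [[6, 2, 7, 8, 4, 3, 9, 5], [4, 2, 9, 8, 6, 5, 3, 7], [0, 6, 9, 1, 4, 8, 5, 7],
     [0, 4, 6, 7, 1, 5, 8, 9], [3, 0, 8, 2, 1, 7, 9, 6], [0, 9, 7, 2, 8, 3, 1, 6],
     [2, 0, 5, 1, 8, 7, 3, 4, 9], [0, 2, 5, 9, 4, 1, 3, 6, 8], [4, 0, 7, 6, 1, 9, 3, 5, 2],
     [5, 0, 3, 8, 1, 2, 6, 4, 7]]"

lemma neighbour_lists_K10_minus_3K2:
  "neighbour_lists 10 {{0, 1}, {2, 3}, {4, 5}} K10_minus_3K2_rotation"
  by (simp add: neighbour_lists_def K10_minus_3K2_rotation_def doubleton_eq_iff upt_rec)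

(* With list_all over the constant triangle_at, simp unfolds triangle_at only at concrete
   darts; a quantified formulation would be expanded symbolically first, which blows up. *)
lemma K10_minus_3K2_faces_are_triangles:
  "list_all (triangle_at (list_rotation K10_minus_3K2_rotation)) (list_darts 10 K10_minus_3K2_rotation)"
  by (simp add: K10_minus_3K2_rotation_def list_darts_def triangle_at_def face_step_def
      list_rotation_def transpose_def upt_rec)

lemma K10_minus_3K2_triangular:
  "has_triangular_orientable_embedding {0..<10} K10_minus_3K2_edges"
proof (rule has_triangular_orientable_embeddingI)
  show "rotation_system {0..<10} K10_minus_3K2_edges (list_rotation K10_minus_3K2_rotation)"
    unfolding K10_minus_3K2_edges_def
    by (rule rotation_system_list_rotation[OF neighbour_lists_K10_minus_3K2])
  show "\<forall>d\<in>darts K10_minus_3K2_edges. triangle_at (list_rotation K10_minus_3K2_rotation) d"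
    using K10_minus_3K2_faces_are_triangles
    unfolding K10_minus_3K2_edges_def darts_K_edges_minus_eq[OF neighbour_lists_K10_minus_3K2]
    by (simp add: list_all_iff)
qed

(* K10_minus_3K2_rotation with the edges {6, 7} and {8, 9} deleted: each deletion merges the two
   triangles along that edge into a quadrilateral. *)
definition O10_rotation :: "nat list list" where
  "O10_rotation =
    [[6, 2, 7, 8, 4, 3, 9, 5], [4, 2, 9, 8, 6, 5, 3, 7], [0, 6, 9, 1, 4, 8, 5, 7],
     [0, 4, 6, 7, 1, 5, 8, 9], [3, 0, 8, 2, 1, 7, 9, 6], [0, 9, 7, 2, 8, 3, 1, 6],
     [2, 0, 5, 1, 8, 3, 4, 9], [0, 2, 5, 9, 4, 1, 3, 8], [4, 0, 7, 6, 1, 3, 5, 2],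
     [5, 0, 3, 1, 2, 6, 4, 7]]"

definition O10_faces :: "nat list list" where
  "O10_faces =
    [[0, 2, 6], [0, 3, 4], [0, 4, 8], [0, 5, 9], [0, 6, 5], [0, 7, 2], [0, 8, 7], [0, 9, 3],
     [1, 2, 4], [1, 3, 5], [1, 4, 7], [1, 5, 6], [1, 6, 8], [1, 7, 3], [1, 8, 3, 9], [1, 9, 2],
     [2, 5, 8], [2, 7, 5], [2, 8, 4], [2, 9, 6], [3, 6, 4], [3, 7, 8, 6], [3, 8, 5], [4, 6, 9],
     [4, 9, 7], [5, 7, 9]]"

definition cycle_darts :: "'a list \<Rightarrow> ('a \<times> 'a) list" where
  "cycle_darts vs = zip vs (rotate1 vs)"

lemma neighbour_lists_O10:
  "neighbour_lists 10 {{0, 1}, {2, 3}, {4, 5}, {6, 7}, {8, 9}} O10_rotation"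
  by (simp add: neighbour_lists_def O10_rotation_def doubleton_eq_iff upt_rec)

lemma O10_face_walks:
  shows "\<forall>w\<in>set (map cycle_darts O10_faces). w \<noteq> [] \<and> set w \<subseteq> darts O10_edges
           \<and> map (face_step (list_rotation O10_rotation)) w = rotate1 w"
    and "distinct (concat (map cycle_darts O10_faces))"
    and "length O10_faces = 26"
  unfolding O10_edges_def darts_K_edges_minus_eq[OF neighbour_lists_O10]
  by (simp_all add: O10_faces_def O10_rotation_def list_darts_def cycle_darts_def face_step_def
      list_rotation_def transpose_def upt_rec)

lemma card_O10_edges: "card O10_edges = 40"
proof -
  have "{{0, 1}, {2, 3}, {4, 5}, {6, 7}, {8, 9}} \<subseteq> K_edges 10"
    by (simp add: K_edges_eq)
  moreover have "card {{0, 1}, {2, 3}, {4, 5}, {6, 7}, {8, 9 :: nat}} = 5"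
    by (simp add: doubleton_eq_iff)
  ultimately show ?thesis
    unfolding O10_edges_def by (simp add: card_Diff_subset card_K_edges choose_two)
qed

lemma card_nbrs_O10:
  assumes "v < 10"
  shows "card (nbrs O10_edges v) = 8"
proof -
  have "list_all (\<lambda>v. length (O10_rotation ! v) = 8) [0..<10]"
    by (simp add: O10_rotation_def upt_rec)
  then have "length (O10_rotation ! v) = 8" using assms by (simp add: list_all_iff)
  moreover have "distinct (O10_rotation ! v)" and "set (O10_rotation ! v) = nbrs O10_edges v"
    using neighbour_lists_nbrs[OF neighbour_lists_O10 assms] unfolding O10_edges_def by auto
  ultimately show ?thesis by (metis distinct_card)
qed

lemma simple_graph_O10: "simple_graph {0..<10} O10_edges"
  unfolding O10_edges_def by (rule simple_graph_K_edges_minus)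

lemma rotation_system_O10: "rotation_system {0..<10} O10_edges (list_rotation O10_rotation)"
  unfolding O10_edges_def by (rule rotation_system_list_rotation[OF neighbour_lists_O10])

lemma card_faces_O10_le:
  assumes "rotation_system {0..<10} O10_edges \<rho>"
  shows "card (faces O10_edges \<rho>) \<le> 26"
proof -
  have "3 * card (faces O10_edges \<rho>) \<le> 2 * card O10_edges"
    using simple_graph_O10 assms by (rule card_faces_le) (simp add: card_nbrs_O10)
  then show ?thesis by (simp add: card_O10_edges)
qed

lemma card_faces_O10_rotation: "card (faces O10_edges (list_rotation O10_rotation)) = 26"
proof (rule antisym)
  show "card (faces O10_edges (list_rotation O10_rotation)) \<le> 26"
    using rotation_system_O10 by (rule card_faces_O10_le)
  have "length (map cycle_darts O10_faces) \<le> card (faces O10_edges (list_rotation O10_rotation))"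
    by (rule length_le_card_faces[OF simple_graph_O10 rotation_system_O10 _ O10_face_walks(2)])
      (use O10_face_walks(1) in blast)
  then show "26 \<le> card (faces O10_edges (list_rotation O10_rotation))"
    using O10_face_walks(3) by simp
qed

lemma emb_genus_O10_ge:
  assumes "rotation_system {0..<10} O10_edges \<rho>"
  shows "3 \<le> emb_genus {0..<10} O10_edges \<rho>"
  using card_faces_O10_le[OF assms] unfolding emb_genus_def card_O10_edges by simp

lemma orientable_genus_O10: "orientable_genus {0..<10} O10_edges = 3"
  unfolding orientable_genus_def
proof (rule Least_equality)
  show "\<exists>\<rho>. rotation_system {0..<10} O10_edges \<rho> \<and> emb_genus {0..<10} O10_edges \<rho> = 3"
  proof (intro exI conjI)
    show "rotation_system {0..<10} O10_edges (list_rotation O10_rotation)"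
      by (rule rotation_system_O10)
    show "emb_genus {0..<10} O10_edges (list_rotation O10_rotation) = 3"
      unfolding emb_genus_def card_O10_edges card_faces_O10_rotation by simp
  qed
qed (use emb_genus_O10_ge in blast)

theorem mainTheorem6:
  shows "simple_graph {0..<10} K10_minus_3K2_edges
       \<and> has_triangular_orientable_embedding {0..<(10::nat)} K10_minus_3K2_edges
       \<and> simple_graph {0..<10} O10_edges
       \<and> orientable_genus {0..<(10::nat)} O10_edges = nat \<lceil>(4 * 2 :: real) / 3\<rceil>
       \<and> orientable_genus {0..<(10::nat)} O10_edges = 3"
proof (intro conjI)
  show "simple_graph {0..<10} K10_minus_3K2_edges"
    unfolding K10_minus_3K2_edges_def by (rule simple_graph_K_edges_minus)
  show "has_triangular_orientable_embedding {0..<(10::nat)} K10_minus_3K2_edges"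
    by (rule K10_minus_3K2_triangular)
  show "simple_graph {0..<10} O10_edges"
    by (rule simple_graph_O10)
  show "orientable_genus {0..<(10::nat)} O10_edges = 3"
    by (fact orientable_genus_O10)
  then show "orientable_genus {0..<(10::nat)} O10_edges = nat \<lceil>(4 * 2 :: real) / 3\<rceil>"
    by (simp add: ceiling_eq_iff)
qed

end
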